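(* Let $0<\lambda\le1$, $f\in\mathcal U(\lambda)$ and $a_2=f''(0)/2$. If $\mu$ is a complex number with $|\mu|\le 1-\lambda$ and $a_2+\mu\ne 0$, then $-\dfrac{1}{a_2+\mu}\notin f(\mathbb D)$.
   Context: $\mathbb D=\{z\in\mathbb C:|z|<1\}$. $\mathcal A$ is the class of functions $f$ analytic in $\mathbb D$ with $f(z)=z+\sum_{k\ge2}a_kz^k$. For $f\in\mathcal A$ with $f(z)\ne0$ for $z\in\mathbb D\setminus\{0\}$, set $U_f(z)=\left(\frac{z}{f(z)}\right)^2f'(z)-1$. For $0<\lambda\le1$, $\mathcal U(\lambda)$ is the class of such $f\in\mathcal A$ with $|U_f(z)|<\lambda$ for all $z\in\mathbb D$. *)

theory Defs
  imports "HOL-Complex_Analysis.Complex_Analysis"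
begin

definition class_A :: "(complex \<Rightarrow> complex) set" where
  "class_A = {f. f holomorphic_on ball 0 1 \<and> f 0 = 0 \<and> deriv f 0 = 1}"

text \<open>U_f(z) = (z/f(z))^2 f'(z) - 1, extended at the removable point z = 0 by its
  limit value (z/f(z) tends to 1/f'(0) = 1 there), i.e. U_f(0) = 0.\<close>
definition U_op :: "(complex \<Rightarrow> complex) \<Rightarrow> complex \<Rightarrow> complex" where
  "U_op f z = (if z = 0 then 0 else (z / f z)^2 * deriv f z - 1)"

definition class_U :: "real \<Rightarrow> (complex \<Rightarrow> complex) set" where
  "class_U lam = {f. f \<in> class_A \<and> (\<forall>z\<in>ball 0 1 - {0}. f z \<noteq> 0) \<and>
                     (\<forall>z\<in>ball 0 1. norm (U_op f z) < lam)}"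

end

theory Submission imports Defs begin

text \<open>Put \<open>h(z) = 1/f(z) - 1/z\<close>. A direct computation gives \<open>z\<^sup>2 h'(z) = -U\<^sub>f(z)\<close>, and \<open>h\<close>
  extends holomorphically to \<open>0\<close> with \<open>h(0) = -a\<^sub>2\<close>. Since \<open>|U\<^sub>f| < \<lambda>\<close>, the maximum principle
  on the circles \<open>|z| = r\<close>, \<open>r \<rightarrow> 1\<close>, yields \<open>|h'| \<le> \<lambda>\<close>, hence \<open>|1/f(z) - 1/z + a\<^sub>2| \<le> \<lambda>|z|\<close>.
  If \<open>f(z) = -1/(a\<^sub>2 + \<mu>)\<close>, this reads \<open>|1/z + \<mu>| \<le> \<lambda>|z|\<close>, so
  \<open>1 < |1/z| \<le> |\<mu>| + \<lambda>|z| < 1 - \<lambda> + \<lambda> = 1\<close>, a contradiction.\<close>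

lemma norm_le_of_norm_power2_mult_less:
  fixes H :: "complex \<Rightarrow> complex"
  assumes holH: "H holomorphic_on ball 0 1"
    and bound: "\<And>z. norm z < 1 \<Longrightarrow> norm (z^2 * H z) < lam"
    and z: "norm z < 1"
  shows "norm (H z) \<le> lam"
proof -
  have "norm (H z) < a" if "lam < a" for a
  proof -
    have "0 \<le> lam" using bound[of 0] by simp
    with \<open>lam < a\<close> have a0: "0 < a" and "sqrt (lam / a) < 1" by auto
    then obtain r where sr: "sqrt (lam / a) < r" and zr: "norm z < r" and "r < 1"
      using z dense[of "max (sqrt (lam / a)) (norm z)" 1] by auto
    have r0: "0 < r" using zr le_less_trans norm_ge_zero by blast
    have "sqrt (lam / a) ^ 2 < r^2"
      using sr \<open>0 \<le> lam\<close> a0 by (intro power_strict_mono) auto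
    then have ra: "lam / r^2 < a" using \<open>0 \<le> lam\<close> a0 r0 by (simp add: field_simps)
    have sub: "cball 0 r \<subseteq> ball 0 1" using \<open>r < 1\<close> by auto
    have "H holomorphic_on cball 0 r" using holH sub by (rule holomorphic_on_subset)
    then have hol: "H holomorphic_on ball 0 r" and cont: "continuous_on (cball 0 r) H"
      by (auto intro: holomorphic_on_subset holomorphic_on_imp_continuous_on)
    obtain w where "w \<in> frontier (ball 0 r)"
      and max: "\<And>u. u \<in> closure (ball 0 r) \<Longrightarrow> norm (H u) \<le> norm (H w)"
      by (rule Schwarz1[OF hol]) (use cont r0 in auto)
    then have w: "norm w = r" using r0 by simp
    have "r^2 * norm (H w) < lam"
      using bound[of w] w \<open>r < 1\<close> by (simp add: norm_mult norm_power)
    then have "norm (H w) < lam / r^2" using r0 by (simp add: field_simps)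
    then show ?thesis using max[of z] zr r0 ra by simp
  qed
  then show ?thesis using not_le by blast
qed

lemma holomorphic_factor_z:
  assumes "f holomorphic_on S" "open S" "0 \<in> S" "f 0 = 0"
  obtains g where "g holomorphic_on S" "\<And>z. f z = z * g z" "g 0 = deriv f 0"
proof
  define g where "g z = (if z = 0 then deriv f 0 else f z / z)" for z
  show "g holomorphic_on S"
    by (rule pole_theorem_open_0[OF assms(1,2), where a=0]) (use assms in \<open>auto simp: g_def\<close>)
  show "f z = z * g z" for z using assms(4) by (simp add: g_def)
  show "g 0 = deriv f 0" by (simp add: g_def)
qed

lemma deriv_deriv_times_z_at_0:
  fixes g :: "complex \<Rightarrow> complex"
  assumes holg: "g holomorphic_on S" and S: "open S" "0 \<in> S"
  shows "deriv (deriv (\<lambda>z. z * g z)) 0 = 2 * deriv g 0"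
proof -
  have dg: "(g has_field_derivative deriv g w) (at w)" if "w \<in> S" for w
    using holg S that holomorphic_derivI by blast
  have first: "deriv (\<lambda>z. z * g z) w = g w + w * deriv g w" if "w \<in> S" for w
    using dg[OF that] by (intro DERIV_imp_deriv) (auto intro!: derivative_eq_intros)
  have "((\<lambda>w. g w + w * deriv g w) has_field_derivative 2 * deriv g 0) (at 0)"
    using DERIV_add[OF dg[OF S(2)] DERIV_mult[OF DERIV_ident
          holomorphic_derivI[OF holomorphic_deriv[OF holg S(1)] S]]]
    by simp
  then have "(deriv (\<lambda>z. z * g z) has_field_derivative 2 * deriv g 0) (at 0)"
    by (rule has_field_derivative_transform_within_open) (use S first in auto)
  then show ?thesis by (rule DERIV_imp_deriv)
qed

lemma inverse_difference_holomorphic_extension: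
  assumes holf: "f holomorphic_on S" and S: "open S" "0 \<in> S"
    and f0: "f 0 = 0" and df0: "deriv f 0 = 1"
    and fnz: "\<And>w. w \<in> S \<Longrightarrow> w \<noteq> 0 \<Longrightarrow> f w \<noteq> 0"
  obtains h where "h holomorphic_on S" "\<And>w. w \<noteq> 0 \<Longrightarrow> h w = 1 / f w - 1 / w"
    "h 0 = - deriv (deriv f) 0 / 2" "\<And>w. w \<in> S \<Longrightarrow> w \<noteq> 0 \<Longrightarrow> w^2 * deriv h w = - U_op f w"
proof -
  obtain g where holg: "g holomorphic_on S" and fg: "\<And>w. f w = w * g w" and g0: "g 0 = 1"
    using holomorphic_factor_z[OF holf S f0] df0 by metis
  have "f = (\<lambda>w. w * g w)" using fg by blast
  then have a2: "deriv (deriv f) 0 / 2 = deriv g 0"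
    using deriv_deriv_times_z_at_0[OF holg S] by simp
  have gnz: "g w \<noteq> 0" if "w \<in> S" for w using fnz[OF that] g0 fg by (cases "w = 0") auto
  define r where "r w = 1 / g w" for w
  have holr: "r holomorphic_on S" unfolding r_def using holg gnz by (intro holomorphic_intros) auto
  have r0: "r 0 = 1" by (simp add: r_def g0)
  define h where "h w = (if w = 0 then deriv r 0 else (r w - r 0) / (w - 0))" for w
  have holh: "h holomorphic_on S"
    unfolding h_def by (rule pole_lemma_open[OF holr S(1)])
  have h_eq: "h w = 1 / f w - 1 / w" if "w \<noteq> 0" for w
    using that by (simp add: h_def r_def r0 fg g0 field_simps)
  have "(r has_field_derivative - deriv g 0) (at 0)"
    unfolding r_def using holomorphic_derivI[OF holg S] g0
    by (auto intro!: derivative_eq_intros)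
  then have h0: "h 0 = - deriv (deriv f) 0 / 2" by (simp add: h_def a2 DERIV_imp_deriv)
  have "w^2 * deriv h w = - U_op f w" if w: "w \<in> S" "w \<noteq> 0" for w
  proof -
    have "((\<lambda>u. 1 / f u - 1 / u) has_field_derivative - deriv f w / (f w)^2 + 1 / w^2) (at w)"
      using holomorphic_derivI[OF holf S(1) w(1)] fnz[OF w] w(2)
      by (auto intro!: derivative_eq_intros simp: field_simps power2_eq_square)
    then have "(h has_field_derivative - deriv f w / (f w)^2 + 1 / w^2) (at w)"
      by (rule has_field_derivative_transform_within_open[where S="S - {0}"])
         (use w S h_eq in auto)
    then have "deriv h w = - deriv f w / (f w)^2 + 1 / w^2" by (rule DERIV_imp_deriv)
    then show ?thesis
      using w(2) fnz[OF w] by (simp add: U_op_def field_simps power2_eq_square)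
  qed
  with holh h_eq h0 show ?thesis using that by blast
qed

lemma class_U_inverse_estimate:
  assumes f: "f \<in> class_U lam" and z: "norm z < 1" "z \<noteq> 0"
  shows "norm (1 / f z - 1 / z + deriv (deriv f) 0 / 2) \<le> lam * norm z"
proof -
  define B where "B = ball (0::complex) 1"
  have B: "open B" "convex B" "0 \<in> B" by (auto simp: B_def)
  have U: "\<And>w. w \<in> B \<Longrightarrow> norm (U_op f w) < lam"
    using f by (auto simp: class_U_def B_def)
  obtain h where holh: "h holomorphic_on B" and h_eq: "\<And>w. w \<noteq> 0 \<Longrightarrow> h w = 1 / f w - 1 / w"
    and h0: "h 0 = - deriv (deriv f) 0 / 2"
    and dh: "\<And>w. w \<in> B \<Longrightarrow> w \<noteq> 0 \<Longrightarrow> w^2 * deriv h w = - U_op f w"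
    by (rule inverse_difference_holomorphic_extension[of f B])
       (use f B in \<open>auto simp: class_U_def class_A_def B_def\<close>)
  have lam_pos: "0 < lam" using U[OF B(3)] by (simp add: U_op_def)
  have dh_bound: "norm (deriv h w) \<le> lam" if "w \<in> B" for w
  proof (rule norm_le_of_norm_power2_mult_less[where H="deriv h"])
    show "deriv h holomorphic_on ball 0 1" using holh B unfolding B_def by (intro holomorphic_deriv)
    show "norm (u^2 * deriv h u) < lam" if "norm u < 1" for u
      using that U[of u] dh[of u] lam_pos by (cases "u = 0") (auto simp: B_def)
  qed (use that in \<open>simp add: B_def\<close>)
  have "norm (h z - h 0) \<le> lam * norm (z - 0)"
  proof (rule field_differentiable_bound[where S=B and f'="deriv h"])
    show "(h has_field_derivative deriv h w) (at w within B)" if "w \<in> B" for w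
      using holomorphic_derivI[OF holh B(1) that] by (rule has_field_derivative_at_within)
  qed (use dh_bound B z in \<open>auto simp: B_def\<close>)
  then show ?thesis using h_eq[OF z(2)] h0 by simp
qed

theorem corollary1p2:
  fixes lam :: real and f :: "complex \<Rightarrow> complex" and mu :: complex
  assumes "0 < lam" and "lam \<le> 1"
    and "f \<in> class_U lam"
    and "norm mu \<le> 1 - lam"
    and "(deriv (deriv f) 0) / 2 + mu \<noteq> 0"
  shows "- 1 / ((deriv (deriv f) 0) / 2 + mu) \<notin> f ` ball 0 1"
proof
  define a2 where "a2 = deriv (deriv f) 0 / 2"
  assume "- 1 / (deriv (deriv f) 0 / 2 + mu) \<in> f ` ball 0 1"
  then obtain z where z: "norm z < 1" and fz: "f z = - 1 / (a2 + mu)"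
    by (auto simp: a2_def)
  have "f 0 = 0" using assms(3) by (simp add: class_U_def class_A_def)
  then have z0: "z \<noteq> 0" using fz assms(5) by (auto simp: a2_def)
  have "1 / f z = - (a2 + mu)" using fz assms(5) by (simp add: a2_def)
  then have "1 / f z - 1 / z + a2 = - (1 / z + mu)" by simp
  then have "norm (1 / z + mu) \<le> lam * norm z"
    using class_U_inverse_estimate[OF assms(3) z z0] unfolding a2_def
    by (metis norm_minus_cancel)
  then have "norm (1 / z) \<le> norm mu + lam * norm z"
    using norm_triangle_ineq4[of "1 / z + mu" mu] by simp
  also have "\<dots> < (1 - lam) + lam"
    using mult_strict_left_mono[OF z assms(1)] assms(4) by simp
  finally show False using z z0 by (simp add: norm_divide field_simps)
qed

end
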